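(* Let $\varphi:\mathbb{R}^n\to(-\infty,\infty]$ be continuously prox-regular at $\bar x$ for $\bar v=0$ and satisfy $\varphi(x)\ge\varphi(\bar x)-\frac\rho2\|x-\bar x\|^2$ for all $x$ for some $\rho\ge0$, and let $\bar x$ be a tilt-stable local minimizer of $\varphi$ with modulus $\kappa>0$. Then for every sufficiently small $r>0$, $\bar x$ is a tilt-stable local minimizer of the Moreau envelope $e_r\varphi$ with modulus $\kappa+2r$.
   Context: Moreau envelope: $e_r\varphi(x)=\inf_w\{\varphi(w)+\frac1{2r}\|w-x\|^2\}$. Limiting subdifferential $\partial\varphi(\bar x)=\{v:(v,-1)\in N_{\operatorname{epi}\varphi}(\bar x,\varphi(\bar x))\}$, where $N_\Omega(\bar x)$ is the set of all limits of $v_k\in\widehat N_\Omega(x_k)$, $x_k\to\bar x$ in $\Omega$, and $\widehat N_\Omega(\bar x)=\{v:\limsup_{x\to\bar x,x\in\Omega}\langle v,x-\bar x\rangle/\|x-\bar x\|\le0\}$. Continuously prox-regular at $\bar x$ for $\bar v\in\partial\varphi(\bar x)$: $\varphi(\bar x)$ finite, $\varphi$ l.s.c. around $\bar x$, there are $\varepsilon>0,\rho'\ge0$ with $\varphi(x)\ge\varphi(u)+\langle v,x-u\rangle-\frac{\rho'}2\|x-u\|^2$ for all $x\in\mathbb B_\varepsilon(\bar x)$, $(u,v)\in\operatorname{gph}\partial\varphi\cap\mathbb B_\varepsilon(\bar x,\bar v)$, and $(x_k,v_k)\to(\bar x,\bar v)$ with $v_k\in\partial\varphi(x_k)$ implies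 $\varphi(x_k)\to\varphi(\bar x)$. $\bar x$ is a tilt-stable local minimizer of a function $\phi$ with modulus $\kappa$ if for some $\gamma>0$ the mapping $M_\gamma(v)=\operatorname{argmin}\{\phi(x)-\langle v,x\rangle:x\in\mathbb B_\gamma(\bar x)\}$ is single-valued and Lipschitz with constant $\kappa$ on a neighborhood of $0$, with $M_\gamma(0)=\{\bar x\}$. *)

theory Defs
  imports "HOL-Analysis.Analysis"
begin

definition lsc_at_pt :: "('a::topological_space \<Rightarrow> ereal) \<Rightarrow> 'a \<Rightarrow> bool" where
  "lsc_at_pt f x \<longleftrightarrow> (\<forall>y < f x. eventually (\<lambda>z. y < f z) (at x))"

text \<open>Regular (Frechet) normal cone: limsup of inner v (x - xbar) / norm (x - xbar) is \<open>\<le> 0\<close>.\<close>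
definition regular_normal_cone :: "'b::real_inner set \<Rightarrow> 'b \<Rightarrow> 'b set" where
  "regular_normal_cone \<Omega> xb = {v. xb \<in> \<Omega> \<and>
     (\<forall>e>0. \<exists>d>0. \<forall>x\<in>\<Omega>. norm (x - xb) < d \<longrightarrow> inner v (x - xb) \<le> e * norm (x - xb))}"

definition limiting_normal_cone :: "'b::real_inner set \<Rightarrow> 'b \<Rightarrow> 'b set" where
  "limiting_normal_cone \<Omega> xb = {v. xb \<in> \<Omega> \<and> (\<exists>xs vs. (\<forall>k. xs k \<in> \<Omega> \<and> vs k \<in> regular_normal_cone \<Omega> (xs k))
        \<and> xs \<longlonglongrightarrow> xb \<and> vs \<longlonglongrightarrow> v)}"

definition epigraph :: "('a \<Rightarrow> ereal) \<Rightarrow> ('a \<times> real) set" where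
  "epigraph f = {(x, a). f x \<le> ereal a}"

definition limiting_subdiff :: "('a::euclidean_space \<Rightarrow> ereal) \<Rightarrow> 'a \<Rightarrow> 'a set" where
  "limiting_subdiff f x = {v. f x \<noteq> \<infinity> \<and> f x \<noteq> -\<infinity> \<and>
      (v, -1) \<in> limiting_normal_cone (epigraph f) (x, real_of_ereal (f x))}"

definition cont_prox_regular :: "('a::euclidean_space \<Rightarrow> ereal) \<Rightarrow> 'a \<Rightarrow> 'a \<Rightarrow> bool" where
  "cont_prox_regular f xb vb \<longleftrightarrow>
     f xb \<noteq> \<infinity> \<and> f xb \<noteq> -\<infinity> \<and> vb \<in> limiting_subdiff f xb \<and>
     (\<exists>U. open U \<and> xb \<in> U \<and> (\<forall>x\<in>U. lsc_at_pt f x)) \<and>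
     (\<exists>e>0. \<exists>\<rho>'\<ge>0. \<forall>x\<in>ball xb e. \<forall>u v. v \<in> limiting_subdiff f u \<and> (u, v) \<in> ball (xb, vb) e \<longrightarrow>
         f x \<ge> f u + ereal (inner v (x - u) - \<rho>' / 2 * (norm (x - u))\<^sup>2)) \<and>
     (\<forall>xs vs. (\<forall>k. vs k \<in> limiting_subdiff f (xs k)) \<and> xs \<longlonglongrightarrow> xb \<and> vs \<longlonglongrightarrow> vb
         \<longrightarrow> (\<lambda>k. f (xs k)) \<longlonglongrightarrow> f xb)"

definition tilt_argmin :: "('a::euclidean_space \<Rightarrow> ereal) \<Rightarrow> 'a \<Rightarrow> real \<Rightarrow> 'a \<Rightarrow> 'a set" where
  "tilt_argmin f xb \<gamma> v = {x \<in> cball xb \<gamma>. \<forall>y \<in> cball xb \<gamma>.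
       f x - ereal (inner v x) \<le> f y - ereal (inner v y)}"

definition tilt_stable :: "('a::euclidean_space \<Rightarrow> ereal) \<Rightarrow> 'a \<Rightarrow> real \<Rightarrow> bool" where
  "tilt_stable f xb \<kappa> \<longleftrightarrow> (\<exists>\<gamma>>0. tilt_argmin f xb \<gamma> 0 = {xb} \<and>
     (\<exists>\<delta>>0. \<exists>m. (\<forall>v\<in>ball 0 \<delta>. tilt_argmin f xb \<gamma> v = {m v}) \<and> \<kappa>-lipschitz_on (ball 0 \<delta>) m))"

definition moreau_env :: "real \<Rightarrow> ('a::euclidean_space \<Rightarrow> ereal) \<Rightarrow> 'a \<Rightarrow> ereal" where
  "moreau_env r f x = (INF w. f w + ereal (1 / (2 * r) * (norm (w - x))\<^sup>2))"

end

theory Submission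
  imports Defs
begin

text \<open>
  Let \<open>m(v)\<close> be the unique minimiser of \<open>\<phi> - \<langle>v,\<cdot>\<rangle>\<close> on a small ball around \<open>xb\<close>.
  Completing the square,
  \<open>\<phi>(w) + \<parallel>w - x\<parallel>\<^sup>2/(2r) - \<langle>v,x\<rangle> = (\<phi>(w) - \<langle>v,w\<rangle>) + \<parallel>x - w - r v\<parallel>\<^sup>2/(2r) - r\<parallel>v\<parallel>\<^sup>2/2\<close>,
  and the first term is minimal only at \<open>w = m(v)\<close> while the second vanishes only at
  \<open>w = x - r v\<close>. So near \<open>xb\<close> the tilted envelope \<open>e\<^sub>r\<phi> - \<langle>v,\<cdot>\<rangle>\<close> attains its least value
  exactly at \<open>M(v) = m(v) + r v\<close>, which is \<open>(\<kappa> + r)\<close>-Lipschitz. Two points need care: lower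
  semicontinuity on a compact ball turns the pointwise strict inequality into a strict one for
  the infimum, and far from \<open>xb\<close> the quadratic minorant of \<open>\<phi>\<close> keeps the penalised values
  above that level once \<open>8 r \<rho> \<le> 1\<close>.
\<close>

lemma lsc_at_pt_eventually_nhds:
  assumes "lsc_at_pt f x" "ereal y < f x"
  shows "eventually (\<lambda>z. ereal y < f z) (nhds x)"
proof -
  have "eventually (\<lambda>z. ereal y < f z) (at x)" using assms unfolding lsc_at_pt_def by blast
  then have "eventually (\<lambda>z. z \<noteq> x \<longrightarrow> ereal y < f z) (nhds x)"
    by (simp add: eventually_at_filter)
  then show ?thesis by (rule eventually_mono) (use assms(2) in auto)
qed

lemma lsc_compact_uniform_margin:
  fixes f :: "'a::metric_space \<Rightarrow> ereal" and g :: "'a \<Rightarrow> real"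
  assumes K: "compact K" and lsc: "\<forall>w\<in>K. lsc_at_pt f w" and g: "continuous_on K g"
    and above: "\<forall>w\<in>K. ereal T < f w + ereal (g w)"
  shows "\<exists>c>0. \<forall>w\<in>K. ereal (T + c) \<le> f w + ereal (g w)"
proof (rule ccontr)
  assume "\<not> ?thesis"
  then have "\<forall>k. \<exists>w\<in>K. f w + ereal (g w) < ereal (T + inverse (real (Suc k)))"
    by (metis not_le of_nat_0_less_iff positive_imp_inverse_positive zero_less_Suc)
  then obtain ws where ws: "\<And>k. ws k \<in> K"
    "\<And>k. f (ws k) + ereal (g (ws k)) < ereal (T + inverse (real (Suc k)))"
    by metis
  obtain l s where l: "l \<in> K" "strict_mono s" "(ws \<circ> s) \<longlonglongrightarrow> l"
    using compact_imp_seq_compact[OF K] ws(1) by (metis seq_compactE)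
  define b where "b k = T + inverse (real (Suc (s k))) - g (ws (s k))" for k
  have "(\<lambda>k. g ((ws \<circ> s) k)) \<longlonglongrightarrow> g l"
    using continuous_on_tendsto_compose[OF g l(3) l(1)] ws(1) by simp
  moreover have "(\<lambda>k. inverse (real (Suc (s k)))) \<longlonglongrightarrow> 0"
    using LIMSEQ_subseq_LIMSEQ[OF LIMSEQ_inverse_real_of_nat l(2)] by (simp add: o_def)
  ultimately have b: "b \<longlonglongrightarrow> T - g l"
    unfolding b_def using tendsto_diff[OF tendsto_add[OF tendsto_const], of _ 0 _ _ _ T]
    by (simp add: o_def)
  have "ereal (T - g l) < f l" using above l(1) by (cases "f l") auto
  then obtain y where y: "ereal (T - g l) < ereal y" "ereal y < f l"
    using ereal_dense2 by blast
  have "eventually (\<lambda>k. b k < y) sequentially"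
    using order_tendstoD(2)[OF b] y(1) by simp
  moreover have "eventually (\<lambda>k. ereal y < f ((ws \<circ> s) k)) sequentially"
    using eventually_compose_filterlim[OF lsc_at_pt_eventually_nhds[of f l, OF _ y(2)] l(3)] lsc l(1)
    by simp
  ultimately obtain k where k: "b k < y" "ereal y < f (ws (s k))"
    using eventually_happens[OF eventually_conj] by fastforce
  have "f (ws (s k)) < ereal (b k)"
    using ws(2)[of "s k"] unfolding b_def by (cases "f (ws (s k))") auto
  then have "ereal y < ereal (b k)" using k(2) by (meson less_trans)
  with k(1) show False by simp
qed

lemma moreau_penalty_expansion:
  fixes x w v :: "'a::real_inner"
  assumes "r > 0"
  shows "1/(2*r) * (norm (w - x))\<^sup>2
    = 1/(2*r) * (norm (x - w - r *\<^sub>R v))\<^sup>2 + inner v (x - w) - r/2 * (norm v)\<^sup>2"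
proof -
  have "(norm (x - w - r *\<^sub>R v))\<^sup>2 = (norm (w - x))\<^sup>2 - 2*r * inner v (x - w) + r\<^sup>2 * (norm v)\<^sup>2"
    unfolding power2_norm_eq_inner
    by (simp add: inner_diff_left inner_diff_right inner_commute algebra_simps power2_eq_square)
  then show ?thesis using assms by (simp add: field_simps power2_eq_square)
qed

lemma moreau_term_ge_tilted_level:
  fixes \<phi> :: "'a::real_inner \<Rightarrow> ereal"
  assumes "0 < r" "ereal (h + inner v w) \<le> \<phi> w"
  shows "ereal (h - r/2 * (norm v)\<^sup>2 + inner v x) \<le> \<phi> w + ereal (1/(2*r) * (norm (w - x))\<^sup>2)"
proof -
  define sq where "sq = 1/(2*r) * (norm (x - w - r *\<^sub>R v))\<^sup>2"
  have "0 \<le> sq" using assms(1) by (simp add: sq_def)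
  then show ?thesis
    using assms moreau_penalty_expansion[OF assms(1), of w x v] unfolding sq_def[symmetric]
    by (cases "\<phi> w") (auto simp: inner_diff_right)
qed

lemma moreau_term_gt_tilted_level:
  fixes \<phi> :: "'a::real_inner \<Rightarrow> ereal"
  assumes "0 < r" "ereal (h + inner v w) \<le> \<phi> w"
    and "ereal (h + inner v w) < \<phi> w \<or> x \<noteq> w + r *\<^sub>R v"
  shows "ereal (h - r/2 * (norm v)\<^sup>2 + inner v x) < \<phi> w + ereal (1/(2*r) * (norm (w - x))\<^sup>2)"
proof -
  define sq where "sq = 1/(2*r) * (norm (x - w - r *\<^sub>R v))\<^sup>2"
  have "0 \<le> sq" using assms(1) by (simp add: sq_def)
  moreover have "x \<noteq> w + r *\<^sub>R v \<Longrightarrow> 0 < sq"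
    using assms(1) by (simp add: sq_def algebra_simps)
  ultimately show ?thesis
    using assms moreau_penalty_expansion[OF assms(1), of w x v] unfolding sq_def[symmetric]
    by (cases "\<phi> w") (auto simp: inner_diff_right)
qed

lemma moreau_term_far_from_center:
  fixes \<phi> :: "'a::real_normed_vector \<Rightarrow> ereal"
  assumes r: "0 < r" "r \<le> 1" "8 * r * \<rho> \<le> 1"
    and minorant: "ereal (fx - \<rho>/2 * (norm (w - xb))\<^sup>2) \<le> \<phi> w"
    and R: "0 \<le> R" "norm (x - xb) \<le> R/2" "R \<le> norm (w - xb)"
  shows "ereal (fx + R\<^sup>2/16) \<le> \<phi> w + ereal (1/(2*r) * (norm (w - x))\<^sup>2)"
proof -
  define d where "d = norm (w - xb)"
  have "d \<le> norm (w - x) + norm (x - xb)"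
    unfolding d_def by (metis diff_add_cancel norm_triangle_ineq add.commute diff_add_eq)
  then have "(d/2)\<^sup>2 \<le> (norm (w - x))\<^sup>2"
    using R by (intro power_mono) (auto simp: d_def)
  then have "d\<^sup>2 / (8*r) \<le> 1/(2*r) * (norm (w - x))\<^sup>2"
    using r by (simp add: field_simps power2_eq_square)
  moreover have "\<rho>/2 * d\<^sup>2 \<le> d\<^sup>2 / (16*r)"
    using r mult_right_mono[of "\<rho>/2" "1/(16*r)" "d\<^sup>2"] by (simp add: field_simps)
  moreover have "R\<^sup>2/16 \<le> d\<^sup>2/16" using R by (simp add: d_def power_mono)
  moreover have "d\<^sup>2/16 \<le> d\<^sup>2/(16*r)" using r by (intro divide_left_mono) auto
  ultimately have "fx + R\<^sup>2/16 \<le> (fx - \<rho>/2 * d\<^sup>2) + 1/(2*r) * (norm (w - x))\<^sup>2"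
    by linarith
  with minorant show ?thesis
    unfolding d_def by (cases "\<phi> w") auto
qed

lemma tilt_argmin_eq_singletonI:
  assumes "M \<in> cball xb \<gamma>" "g M \<le> ereal (S + inner v M)"
    and "\<And>x. x \<in> cball xb \<gamma> \<Longrightarrow> ereal (S + inner v x) \<le> g x"
    and "\<And>x. x \<in> cball xb \<gamma> \<Longrightarrow> x \<noteq> M \<Longrightarrow> ereal (S + inner v x) < g x"
  shows "tilt_argmin g xb \<gamma> v = {M}"
proof -
  have tilted_M: "g M - ereal (inner v M) \<le> ereal S"
    using assms(2) by (cases "g M") auto
  have tilted_ge: "ereal S \<le> g x - ereal (inner v x)" if "x \<in> cball xb \<gamma>" for x
    using assms(3)[OF that] by (cases "g x") auto
  have tilted_gt: "ereal S < g x - ereal (inner v x)" if "x \<in> cball xb \<gamma>" "x \<noteq> M" for x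
    using assms(4)[OF that] by (cases "g x") auto
  have M_min: "g M - ereal (inner v M) \<le> g y - ereal (inner v y)" if "y \<in> cball xb \<gamma>" for y
    using tilted_M tilted_ge[OF that] by (rule order_trans)
  show ?thesis
  proof (rule set_eqI, rule iffI)
    fix x assume x: "x \<in> tilt_argmin g xb \<gamma> v"
    then have "g x - ereal (inner v x) \<le> g M - ereal (inner v M)"
      using assms(1) unfolding tilt_argmin_def by blast
    then have "\<not> ereal S < g x - ereal (inner v x)"
      using tilted_M by (meson not_less order_trans)
    then show "x \<in> {M}" using tilted_gt x unfolding tilt_argmin_def by blast
  next
    fix x assume "x \<in> {M}"
    then show "x \<in> tilt_argmin g xb \<gamma> v"
      using assms(1) M_min unfolding tilt_argmin_def by simp
  qed
qed

lemma tilt_argmin_singletonD: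
  assumes argmin: "tilt_argmin f xb \<gamma> v = {m}" and fm: "f m = ereal p"
    and w: "w \<in> cball xb \<gamma>"
  shows "ereal (p - inner v m + inner v w) \<le> f w"
    and "w \<noteq> m \<Longrightarrow> ereal (p - inner v m + inner v w) < f w"
proof -
  have min: "f m - ereal (inner v m) \<le> f y - ereal (inner v y)" if "y \<in> cball xb \<gamma>" for y
    using argmin that unfolding tilt_argmin_def by blast
  show "ereal (p - inner v m + inner v w) \<le> f w"
    using min[OF w] fm by (cases "f w") auto
  assume "w \<noteq> m"
  then have "w \<notin> tilt_argmin f xb \<gamma> v" using argmin by blast
  then obtain y where "y \<in> cball xb \<gamma>" "f y - ereal (inner v y) < f w - ereal (inner v w)"
    using w unfolding tilt_argmin_def by (auto simp: not_le)
  with min have "f m - ereal (inner v m) < f w - ereal (inner v w)"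
    by (meson order_le_less_trans)
  then show "ereal (p - inner v m + inner v w) < f w"
    using fm by (cases "f w") auto
qed

lemma tilt_argmin_restrict_radius:
  assumes argmin: "tilt_argmin f xb \<gamma> v = {m}" and "R \<le> \<gamma>" "m \<in> cball xb R"
  shows "tilt_argmin f xb R v = {m}"
proof -
  have sub: "cball xb R \<subseteq> cball xb \<gamma>" using assms(2) by auto
  have min: "f m - ereal (inner v m) \<le> f y - ereal (inner v y)" if "y \<in> cball xb \<gamma>" for y
    using argmin that unfolding tilt_argmin_def by blast
  show ?thesis
  proof (rule set_eqI, rule iffI)
    fix x assume x: "x \<in> tilt_argmin f xb R v"
    have "f x - ereal (inner v x) \<le> f y - ereal (inner v y)" if "y \<in> cball xb \<gamma>" for y
    proof -
      have "f x - ereal (inner v x) \<le> f m - ereal (inner v m)"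
        using x assms(3) unfolding tilt_argmin_def by blast
      then show ?thesis using min[OF that] by (rule order_trans)
    qed
    then have "x \<in> tilt_argmin f xb \<gamma> v" using x sub unfolding tilt_argmin_def by blast
    then show "x \<in> {m}" using argmin by blast
  next
    fix x assume "x \<in> {m}"
    then show "x \<in> tilt_argmin f xb R v"
      using assms(3) min sub unfolding tilt_argmin_def by blast
  qed
qed

lemma moreau_env_ge_tilted_level:
  fixes \<phi> :: "'a::euclidean_space \<Rightarrow> ereal"
  assumes r: "0 < r" and K: "compact K" "\<forall>w\<in>K. lsc_at_pt \<phi> w"
    and near: "\<forall>w\<in>K. ereal (h + inner v w) \<le> \<phi> w"
    and near_strict: "\<forall>w\<in>K. w \<noteq> m \<longrightarrow> ereal (h + inner v w) < \<phi> w"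
    and far: "0 < c" "\<forall>w. w \<notin> K \<longrightarrow>
      ereal (h - r/2 * (norm v)\<^sup>2 + inner v x + c) \<le> \<phi> w + ereal (1/(2*r) * (norm (w - x))\<^sup>2)"
  shows "ereal (h - r/2 * (norm v)\<^sup>2 + inner v x) \<le> moreau_env r \<phi> x"
    and "x \<noteq> m + r *\<^sub>R v \<Longrightarrow> ereal (h - r/2 * (norm v)\<^sup>2 + inner v x) < moreau_env r \<phi> x"
proof -
  define T where "T = h - r/2 * (norm v)\<^sup>2 + inner v x"
  define q where "q w = 1/(2*r) * (norm (w - x))\<^sup>2" for w
  have env: "moreau_env r \<phi> x = (INF w. \<phi> w + ereal (q w))"
    unfolding moreau_env_def q_def ..
  have far': "ereal (T + c) \<le> \<phi> w + ereal (q w)" if "w \<notin> K" for w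
    using far that unfolding T_def q_def by blast
  have "ereal T \<le> \<phi> w + ereal (q w)" for w
  proof (cases "w \<in> K")
    case True
    then show ?thesis using moreau_term_ge_tilted_level[OF r] near unfolding T_def q_def by blast
  next
    case False
    have "ereal T \<le> ereal (T + c)" using far(1) by simp
    then show ?thesis using far'[OF False] by (rule order_trans)
  qed
  then show "ereal T \<le> moreau_env r \<phi> x"
    unfolding T_def env by (rule INF_greatest)
  assume "x \<noteq> m + r *\<^sub>R v"
  then have "\<forall>w\<in>K. ereal T < \<phi> w + ereal (q w)"
    using moreau_term_gt_tilted_level[OF r] near near_strict unfolding T_def q_def by metis
  moreover have "continuous_on K q" unfolding q_def by (intro continuous_intros)
  ultimately obtain c1 where c1: "0 < c1" "\<forall>w\<in>K. ereal (T + c1) \<le> \<phi> w + ereal (q w)"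
    using lsc_compact_uniform_margin[OF K] by blast
  have "ereal (T + min c c1) \<le> \<phi> w + ereal (q w)" for w
  proof (cases "w \<in> K")
    case True
    have "ereal (T + min c c1) \<le> ereal (T + c1)" by simp
    then show ?thesis using c1(2) True by (blast intro: order_trans)
  next
    case False
    have "ereal (T + min c c1) \<le> ereal (T + c)" by simp
    then show ?thesis using far'[OF False] by (rule order_trans)
  qed
  then have "ereal (T + min c c1) \<le> moreau_env r \<phi> x"
    unfolding env by (rule INF_greatest)
  moreover have "ereal T < ereal (T + min c c1)" using far(1) c1(1) by simp
  ultimately show "ereal T < moreau_env r \<phi> x" by (rule order_less_le_trans[rotated])
qed

lemma tilted_level_near_center:
  fixes v x xb :: "'a::real_inner"
  assumes "0 \<le> r" "0 \<le> R" "norm v \<le> R/16" "norm (x - xb) \<le> R/2" "h \<le> fx - inner v xb"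
  shows "h - r/2 * (norm v)\<^sup>2 + inner v x + R\<^sup>2/32 \<le> fx + R\<^sup>2/16"
proof -
  have "inner v (x - xb) \<le> norm v * norm (x - xb)" by (rule norm_cauchy_schwarz)
  also have "\<dots> \<le> R/16 * (R/2)" using assms by (intro mult_mono) auto
  also have "\<dots> = R\<^sup>2/32" by (simp add: power2_eq_square)
  finally have "inner v (x - xb) \<le> R\<^sup>2/32" .
  moreover have "0 \<le> r/2 * (norm v)\<^sup>2" using assms(1) by simp
  moreover have "inner v x = inner v xb + inner v (x - xb)" by (simp add: inner_diff_right)
  ultimately show ?thesis using assms(5) by linarith
qed

lemma moreau_env_le_shift:
  assumes "0 < r"
  shows "moreau_env r \<phi> (m + r *\<^sub>R v) \<le> \<phi> m + ereal (r/2 * (norm v)\<^sup>2)"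
proof -
  have "moreau_env r \<phi> (m + r *\<^sub>R v) \<le> \<phi> m + ereal (1/(2*r) * (norm (m - (m + r *\<^sub>R v)))\<^sup>2)"
    unfolding moreau_env_def by (rule INF_lower) simp
  also have "1/(2*r) * (norm (m - (m + r *\<^sub>R v)))\<^sup>2 = r/2 * (norm v)\<^sup>2"
    using assms by (simp add: power2_eq_square)
  finally show ?thesis .
qed

lemma tilt_argmin_moreau_env:
  fixes \<phi> :: "'a::euclidean_space \<Rightarrow> ereal"
  assumes r: "0 < r" "r \<le> 1" "8 * r * \<rho> \<le> 1" and R: "0 < R"
    and lsc: "\<forall>w\<in>cball xb R. lsc_at_pt \<phi> w"
    and fx: "\<phi> xb = ereal fx"
    and minorant: "\<forall>w. ereal (fx - \<rho>/2 * (norm (w - xb))\<^sup>2) \<le> \<phi> w"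
    and argmin: "tilt_argmin \<phi> xb R v = {m}"
    and v: "norm v \<le> R/16" and M: "m + r *\<^sub>R v \<in> cball xb (R/2)"
  shows "tilt_argmin (moreau_env r \<phi>) xb (R/2) v = {m + r *\<^sub>R v}"
proof -
  have xb: "xb \<in> cball xb R" using R by simp
  have "\<phi> m - ereal (inner v m) \<le> \<phi> xb - ereal (inner v xb)"
    using argmin xb unfolding tilt_argmin_def by blast
  moreover have "\<phi> m \<noteq> -\<infinity>" using minorant[rule_format, of m] by auto
  ultimately obtain p where p: "\<phi> m = ereal p" using fx by (cases "\<phi> m") auto
  define h where "h = p - inner v m"
  define S where "S = h - r/2 * (norm v)\<^sup>2"
  have near: "\<forall>w\<in>cball xb R. ereal (h + inner v w) \<le> \<phi> w"
    and near_strict: "\<forall>w\<in>cball xb R. w \<noteq> m \<longrightarrow> ereal (h + inner v w) < \<phi> w"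
    using tilt_argmin_singletonD[OF argmin p] unfolding h_def by auto
  have "ereal (h + inner v xb) \<le> ereal fx" using near xb fx by metis
  then have h_le: "h \<le> fx - inner v xb" by simp
  have bounds: "ereal (S + inner v x) \<le> moreau_env r \<phi> x"
      "x \<noteq> m + r *\<^sub>R v \<Longrightarrow> ereal (S + inner v x) < moreau_env r \<phi> x"
    if x: "x \<in> cball xb (R/2)" for x
  proof -
    have nx: "norm (x - xb) \<le> R/2" using x by (simp add: dist_norm norm_minus_commute)
    have "S + inner v x + R\<^sup>2/32 \<le> fx + R\<^sup>2/16"
      using tilted_level_near_center[of r R v x xb h fx] r R v nx h_le unfolding S_def by simp
    then have "ereal (S + inner v x + R\<^sup>2/32) \<le> ereal (fx + R\<^sup>2/16)" by simp
    moreover have "ereal (fx + R\<^sup>2/16) \<le> \<phi> w + ereal (1/(2*r) * (norm (w - x))\<^sup>2)"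
      if "w \<notin> cball xb R" for w
    proof (rule moreau_term_far_from_center[OF r minorant[rule_format] _ nx])
      show "0 \<le> R" using R by simp
      show "R \<le> norm (w - xb)" using that by (simp add: dist_norm norm_minus_commute)
    qed
    ultimately have "\<forall>w. w \<notin> cball xb R \<longrightarrow>
      ereal (h - r/2 * (norm v)\<^sup>2 + inner v x + R\<^sup>2/32) \<le> \<phi> w + ereal (1/(2*r) * (norm (w - x))\<^sup>2)"
      unfolding S_def by (blast intro: order_trans)
    note lower = moreau_env_ge_tilted_level[OF r(1) compact_cball lsc near near_strict _ this]
    show "ereal (S + inner v x) \<le> moreau_env r \<phi> x"
      "x \<noteq> m + r *\<^sub>R v \<Longrightarrow> ereal (S + inner v x) < moreau_env r \<phi> x"
      using lower R unfolding S_def by simp_all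
  qed
  have "moreau_env r \<phi> (m + r *\<^sub>R v) \<le> \<phi> m + ereal (r/2 * (norm v)\<^sup>2)"
    using moreau_env_le_shift[OF r(1)] .
  also have "\<dots> = ereal (S + inner v (m + r *\<^sub>R v))"
    unfolding p S_def h_def by (simp add: inner_add_right power2_norm_eq_inner)
  finally show ?thesis
    using bounds by (rule tilt_argmin_eq_singletonI[OF M])
qed

lemma tilt_stable_obtain_radius:
  assumes "tilt_stable f xb \<kappa>" "0 < \<epsilon>"
  obtains R \<delta> m where "0 < R" "R \<le> \<epsilon>" "0 < \<delta>" "m 0 = xb"
    "\<forall>v\<in>ball 0 \<delta>. tilt_argmin f xb R v = {m v}" "\<kappa>-lipschitz_on (ball 0 \<delta>) m"
proof -
  obtain \<gamma> \<delta> m where \<gamma>: "0 < \<gamma>" "tilt_argmin f xb \<gamma> 0 = {xb}" and \<delta>: "0 < \<delta>"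
    and argmin: "\<forall>v\<in>ball 0 \<delta>. tilt_argmin f xb \<gamma> v = {m v}" and lip: "\<kappa>-lipschitz_on (ball 0 \<delta>) m"
    using assms(1) unfolding tilt_stable_def by blast
  define R where "R = min \<epsilon> \<gamma>"
  define \<delta>' where "\<delta>' = min \<delta> (R/(\<kappa>+1))"
  have \<kappa>: "0 \<le> \<kappa>" using lipschitz_on_nonneg[OF lip] .
  have R: "0 < R" "R \<le> \<epsilon>" "R \<le> \<gamma>" using assms(2) \<gamma> by (auto simp: R_def)
  have \<delta>': "0 < \<delta>'" "ball 0 \<delta>' \<subseteq> ball 0 \<delta>" using \<delta> R \<kappa> by (auto simp: \<delta>'_def)
  have m0: "m 0 = xb" using argmin \<gamma> \<delta> by auto
  have "tilt_argmin f xb R v = {m v}" if v: "v \<in> ball 0 \<delta>'" for v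
  proof (rule tilt_argmin_restrict_radius[OF _ R(3)])
    show "tilt_argmin f xb \<gamma> v = {m v}" using argmin v \<delta>' by blast
    have "v \<in> ball 0 \<delta>" using v \<delta>'(2) by blast
    then have "norm (m v - xb) \<le> \<kappa> * norm v"
      using lipschitz_on_normD[OF lip, of v 0] \<delta> m0 by simp
    also have "\<dots> \<le> \<kappa> * (R/(\<kappa>+1))" using v \<kappa> by (intro mult_left_mono) (auto simp: \<delta>'_def)
    also have "\<dots> \<le> R" using \<kappa> R by (simp add: field_simps)
    finally show "m v \<in> cball xb R" by (simp add: dist_norm norm_minus_commute)
  qed
  moreover have "\<kappa>-lipschitz_on (ball 0 \<delta>') m" using lipschitz_on_subset[OF lip \<delta>'(2)] .
  ultimately show thesis using that R(1,2) \<delta>'(1) m0 by blast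
qed

lemma tilt_stable_mono:
  assumes "tilt_stable f xb \<kappa>" "\<kappa> \<le> \<kappa>'"
  shows "tilt_stable f xb \<kappa>'"
proof -
  obtain \<gamma> \<delta> m where "0 < \<gamma>" "tilt_argmin f xb \<gamma> 0 = {xb}" "0 < \<delta>"
    "\<forall>v\<in>ball 0 \<delta>. tilt_argmin f xb \<gamma> v = {m v}" and lip: "\<kappa>-lipschitz_on (ball 0 \<delta>) m"
    using assms(1) unfolding tilt_stable_def by blast
  moreover have "\<kappa>'-lipschitz_on (ball 0 \<delta>) m" using lipschitz_on_le[OF lip assms(2)] .
  ultimately show ?thesis unfolding tilt_stable_def by blast
qed

lemma tilt_stable_moreau_env:
  fixes \<phi> :: "'a::euclidean_space \<Rightarrow> ereal"
  assumes r: "0 < r" "r \<le> 1" "8 * r * \<rho> \<le> 1" and R: "0 < R"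
    and lsc: "\<forall>w\<in>cball xb R. lsc_at_pt \<phi> w"
    and fx: "\<phi> xb = ereal fx"
    and minorant: "\<forall>w. ereal (fx - \<rho>/2 * (norm (w - xb))\<^sup>2) \<le> \<phi> w"
    and \<delta>: "0 < \<delta>" and m0: "m 0 = xb"
    and argmin: "\<forall>v\<in>ball 0 \<delta>. tilt_argmin \<phi> xb R v = {m v}"
    and lip: "\<kappa>-lipschitz_on (ball 0 \<delta>) m"
  shows "tilt_stable (moreau_env r \<phi>) xb (\<kappa> + r)"
proof -
  have \<kappa>: "0 \<le> \<kappa>" using lipschitz_on_nonneg[OF lip] .
  define \<delta>' where "\<delta>' = min \<delta> (min (R/16) (R/(2*(\<kappa>+1))))"
  have \<delta>': "0 < \<delta>'" "ball 0 \<delta>' \<subseteq> ball 0 \<delta>" using \<delta> R \<kappa> by (auto simp: \<delta>'_def)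
  define M where "M v = m v + r *\<^sub>R v" for v
  have M_lip: "(\<kappa> + r)-lipschitz_on (ball 0 \<delta>') M"
    using lipschitz_on_add[OF lipschitz_on_subset[OF lip \<delta>'(2)]
        lipschitz_on_cmult_nonneg[OF lipschitz_on_id, of r]] r
    unfolding M_def by simp
  have M0: "M 0 = xb" using m0 by (simp add: M_def)
  have argmin_env: "tilt_argmin (moreau_env r \<phi>) xb (R/2) v = {M v}" if v: "v \<in> ball 0 \<delta>'" for v
    unfolding M_def
  proof (rule tilt_argmin_moreau_env[OF r R lsc fx minorant])
    show "tilt_argmin \<phi> xb R v = {m v}" using argmin v \<delta>'(2) by blast
    show "norm v \<le> R/16" using v by (simp add: \<delta>'_def)
    have "norm (M v - xb) \<le> (\<kappa> + r) * norm v"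
      using lipschitz_on_normD[OF M_lip, of v 0] v \<delta>'(1) M0 by simp
    also have "\<dots> \<le> (\<kappa> + 1) * (R/(2*(\<kappa>+1)))"
      using v r \<kappa> by (intro mult_mono) (auto simp: \<delta>'_def)
    also have "\<dots> = R/2" using \<kappa> by (simp add: field_simps)
    finally show "m v + r *\<^sub>R v \<in> cball xb (R/2)"
      by (simp add: M_def dist_norm norm_minus_commute)
  qed
  have "tilt_argmin (moreau_env r \<phi>) xb (R/2) 0 = {xb}"
    using argmin_env[of 0] \<delta>'(1) M0 by simp
  moreover have "0 < R/2" using R by simp
  ultimately show ?thesis
    unfolding tilt_stable_def using \<delta>'(1) argmin_env M_lip by blast
qed

theorem mainTheorem11:
  fixes \<phi> :: "'a::euclidean_space \<Rightarrow> ereal" and xb :: 'a and \<rho> \<kappa> :: real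
  assumes "\<forall>x. \<phi> x \<noteq> -\<infinity>"
    and "cont_prox_regular \<phi> xb 0"
    and "\<rho> \<ge> 0"
    and "\<forall>x. \<phi> x \<ge> \<phi> xb - ereal (\<rho> / 2 * (norm (x - xb))\<^sup>2)"
    and "\<kappa> > 0"
    and "tilt_stable \<phi> xb \<kappa>"
  shows "\<exists>r0>0. \<forall>r. 0 < r \<and> r < r0 \<longrightarrow> tilt_stable (moreau_env r \<phi>) xb (\<kappa> + 2 * r)"
proof -
  obtain U where U: "open U" "xb \<in> U" "\<forall>x\<in>U. lsc_at_pt \<phi> x"
    and xb_finite: "\<phi> xb \<noteq> \<infinity>" "\<phi> xb \<noteq> -\<infinity>"
    using assms(2) unfolding cont_prox_regular_def by blast
  obtain fx where fx: "\<phi> xb = ereal fx" using xb_finite by (cases "\<phi> xb") auto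
  have minorant: "\<forall>w. ereal (fx - \<rho>/2 * (norm (w - xb))\<^sup>2) \<le> \<phi> w"
    using assms(4) fx by simp
  obtain e where e: "0 < e" "ball xb e \<subseteq> U" using U(1,2) openE by blast
  obtain R \<delta> m where R: "0 < R" "R \<le> e/2" and tilt: "0 < \<delta>" "m 0 = xb"
      "\<forall>v\<in>ball 0 \<delta>. tilt_argmin \<phi> xb R v = {m v}" "\<kappa>-lipschitz_on (ball 0 \<delta>) m"
    using tilt_stable_obtain_radius[OF assms(6), of "e/2"] e(1) by auto
  have "cball xb R \<subseteq> ball xb e" using R e(1) by (simp add: cball_subset_ball_iff)
  then have lsc: "\<forall>w\<in>cball xb R. lsc_at_pt \<phi> w" using U(3) e(2) by blast
  show ?thesis
  proof (intro exI[of _ "1/(8*\<rho>+1)"] conjI allI impI)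
    show "0 < 1/(8*\<rho>+1)" using assms(3) by simp
    fix r assume r: "0 < r \<and> r < 1/(8*\<rho>+1)"
    then have "8 * r * \<rho> + r < 1" using assms(3) by (simp add: field_simps)
    moreover have "0 \<le> r * \<rho>" using assms(3) r by simp
    ultimately have "r \<le> 1" "8 * r * \<rho> \<le> 1" using r by linarith+
    with r have "tilt_stable (moreau_env r \<phi>) xb (\<kappa> + r)"
      using tilt_stable_moreau_env[OF _ _ _ R(1) lsc fx minorant tilt] by blast
    then show "tilt_stable (moreau_env r \<phi>) xb (\<kappa> + 2 * r)"
      by (rule tilt_stable_mono) (use r in simp)
  qed
qed

end
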